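(* Let $\tilde G=(\mathbf H\oplus\mathbf V,\ast)$ be the Lie group defined below, with Lie algebra $\mathfrak g$, and let $\delta:\mathfrak g\to\mathfrak g\wedge\mathfrak g$ be a 1-cocycle making $(\mathfrak g,\delta)$ a Lie bialgebra. Suppose that in the dual Lie algebra $\mathfrak g^*=\mathbf H^*\oplus\mathbf V^*$ (with bracket $\delta^*$) the subspace $\mathbf H^*$ is an abelian subalgebra. Then for the (unique) Poisson–Lie structure on $\tilde G$ whose linearization at the identity is $\delta$, one has $\{h^i,h^j\}=0$ identically on all of $\tilde G$, for all $i,j$, where $h^i$ are the linear coordinate functions on $\tilde G$ coming from a basis of $\mathbf H^*$.
   Context: $\mathbf H$ and $\mathbf V$ are finite-dimensional real vector spaces; $\mathbf H$ is regarded as a commutative Lie group under addition. $\rho_1,\rho_2:\mathbf H\to GL(\mathbf V)$ are two representations (group homomorphisms) whose images commute with each other. $\tilde G$ is the set $\mathbf H\oplus\mathbf V$ with the group law $(h,v)\ast(h',v')=(h+h',\ \rho_1(h)v'+\rho_2(h')^{-1}v)$; its unit is $(0,0)$ and $(h,v)^{-1}=(-h,-\rho_1(-h)\rho_2(h)v)$. Since $\tilde G$ is diffeomorphic to a vector space (connected and simply connected), every Lie bialgebra structure $\delta$ on its Lie algebra integrates to a unique Poisson–Lie structure on $\tilde G$ whose linearization at the identity is $\delta$. The linear functions $h^i$ (from $\mathbf H^*$) and $v^m$ (from $\mathbf V^*$) are the coordinate functions on $\tilde G$. *)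

theory Defs
  imports "HOL-Analysis.Analysis"
begin

text \<open>A (continuous, hence smooth) representation of the additive group real^'h on real^'v.\<close>
definition is_rep :: "(real^'h \<Rightarrow> real^'v^'v) \<Rightarrow> bool" where
  "is_rep \<rho> \<longleftrightarrow> \<rho> 0 = mat 1 \<and> (\<forall>a b. \<rho> (a + b) = \<rho> a ** \<rho> b) \<and> continuous_on UNIV \<rho>"

definition gmult :: "(real^'h \<Rightarrow> real^'v^'v) \<Rightarrow> (real^'h \<Rightarrow> real^'v^'v)
    \<Rightarrow> ((real^'h) \<times> (real^'v)) \<Rightarrow> ((real^'h) \<times> (real^'v)) \<Rightarrow> ((real^'h) \<times> (real^'v))" where
  "gmult \<rho>1 \<rho>2 p q = (fst p + fst q, \<rho>1 (fst p) *v snd q + matrix_inv (\<rho>2 (fst q)) *v snd p)"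

coinductive Cinf :: "('a::euclidean_space \<Rightarrow> real) \<Rightarrow> bool" where
  "(\<forall>x. f differentiable (at x)) \<Longrightarrow> (\<forall>b\<in>Basis. Cinf (\<lambda>x. frechet_derivative f (at x) b)) \<Longrightarrow> Cinf f"

text \<open>Covectors are represented by vectors via the inner product.
  Gradient (differential) of a function at a point:\<close>
definition grad :: "('a::euclidean_space \<Rightarrow> real) \<Rightarrow> 'a \<Rightarrow> 'a" where
  "grad f x = (\<Sum>b\<in>Basis. frechet_derivative f (at x) b *\<^sub>R b)"

text \<open>Pull-back of a covector along a linear map D (i.e. the covector a o D).\<close>
definition pull :: "('a::euclidean_space \<Rightarrow> 'a) \<Rightarrow> 'a \<Rightarrow> 'a" where
  "pull D a = (\<Sum>b\<in>Basis. (a \<bullet> D b) *\<^sub>R b)"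

text \<open>A bivector field: pi x is a bilinear form on covectors at x.  Poisson bracket:\<close>
definition pbr :: "('a::euclidean_space \<Rightarrow> 'a \<Rightarrow> 'a \<Rightarrow> real) \<Rightarrow> ('a \<Rightarrow> real) \<Rightarrow> ('a \<Rightarrow> real) \<Rightarrow> 'a \<Rightarrow> real" where
  "pbr \<pi> f g x = \<pi> x (grad f x) (grad g x)"

definition poisson_bivector :: "('a::euclidean_space \<Rightarrow> 'a \<Rightarrow> 'a \<Rightarrow> real) \<Rightarrow> bool" where
  "poisson_bivector \<pi> \<longleftrightarrow>
     (\<forall>x. bilinear (\<pi> x) \<and> (\<forall>a b. \<pi> x a b = - \<pi> x b a)) \<and>
     (\<forall>a b. Cinf (\<lambda>x. \<pi> x a b)) \<and>
     (\<forall>f g k x. Cinf f \<longrightarrow> Cinf g \<longrightarrow> Cinf k \<longrightarrow>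
        pbr \<pi> f (pbr \<pi> g k) x + pbr \<pi> g (pbr \<pi> k f) x + pbr \<pi> k (pbr \<pi> f g) x = 0)"

text \<open>Multiplicativity: pi(g*k) = (L_g)_* pi(k) + (R_k)_* pi(g).\<close>
definition multiplicative :: "('a::euclidean_space \<Rightarrow> 'a \<Rightarrow> 'a) \<Rightarrow> ('a \<Rightarrow> 'a \<Rightarrow> 'a \<Rightarrow> real) \<Rightarrow> bool" where
  "multiplicative m \<pi> \<longleftrightarrow> (\<forall>g k a b.
     \<pi> (m g k) a b =
       \<pi> k (pull (frechet_derivative (\<lambda>y. m g y) (at k)) a) (pull (frechet_derivative (\<lambda>y. m g y) (at k)) b)
     + \<pi> g (pull (frechet_derivative (\<lambda>y. m y k) (at g)) a) (pull (frechet_derivative (\<lambda>y. m y k) (at g)) b))"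

definition poisson_lie :: "('a::euclidean_space \<Rightarrow> 'a \<Rightarrow> 'a) \<Rightarrow> ('a \<Rightarrow> 'a \<Rightarrow> 'a \<Rightarrow> real) \<Rightarrow> bool" where
  "poisson_lie m \<pi> \<longleftrightarrow> poisson_bivector \<pi> \<and> multiplicative m \<pi>"

definition linearization :: "'a \<Rightarrow> ('a::euclidean_space \<Rightarrow> 'a \<Rightarrow> 'a \<Rightarrow> real) \<Rightarrow> 'a \<Rightarrow> 'a \<Rightarrow> 'a \<Rightarrow> real" where
  "linearization e \<pi> X a b = frechet_derivative (\<lambda>x. \<pi> x a b) (at e) X"

definition dual_bracket :: "'a \<Rightarrow> ('a::euclidean_space \<Rightarrow> 'a \<Rightarrow> 'a \<Rightarrow> real) \<Rightarrow> 'a \<Rightarrow> 'a \<Rightarrow> ('a \<Rightarrow> real)" where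
  "dual_bracket e \<pi> a b = (\<lambda>X. linearization e \<pi> X a b)"

end

theory Submission
  imports Defs
begin

text \<open>
  Fix \<open>a, b \<in> H*\<close> and put \<open>f g = \<pi>\<^sub>g((a,0),(b,0))\<close>. The \<open>H\<close>-component of the group law is
  plain addition, so the differentials of all left and right translations fix the
  \<open>H\<close>-component, and their transposes fix the covectors \<open>(a,0)\<close>. Multiplicativity of \<open>\<pi>\<close>
  therefore reads \<open>f(gk) = f g + f k\<close>, and \<open>df(e) = \<delta>*(a,b) = 0\<close>. On the abelian subgroups
  \<open>H \<times> 0\<close> and \<open>0 \<times> V\<close> the function \<open>f\<close> is additive with zero derivative at \<open>0\<close>, hence zero;
  since every element is a product \<open>(0,v) * (h,0)\<close>, \<open>f\<close> vanishes identically.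

  The pull-backs only make sense once translations are differentiable, i.e. once the
  continuous representations are. For a continuous one-parameter group \<open>\<phi>\<close> of matrices,
  \<open>\<phi>(x) M = \<integral>[x, x+\<epsilon>] \<phi>\<close> where \<open>M = \<integral>[0, \<epsilon>] \<phi>\<close> is invertible for small \<open>\<epsilon>\<close>,
  so \<open>\<phi>\<close> is a difference of antiderivatives times \<open>M\<^sup>-\<^sup>1\<close> and hence differentiable.
\<close>

lemma bounded_bilinear_matrix_matrix_mult:
  "bounded_bilinear (\<lambda>(A::real^'n^'m) (B::real^'k^'n). A ** B)"
  unfolding bilinear_conv_bounded_bilinear[symmetric] bilinear_def
  by (auto intro!: linearI simp: vec_eq_iff matrix_matrix_mult_def sum.distrib algebra_simps sum_distrib_left)

lemma bounded_bilinear_matrix_vector_mult: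
  "bounded_bilinear (\<lambda>(A::real^'n^'m) (x::real^'n). A *v x)"
  unfolding bilinear_conv_bounded_bilinear[symmetric] bilinear_def
  by (auto intro!: linearI simp: vec_eq_iff matrix_vector_mult_def sum.distrib algebra_simps sum_distrib_left)

lemma norm_matrix_vector_mult_le:
  fixes A :: "real^'n^'m"
  shows "norm (A *v x) \<le> norm A * norm x"
proof -
  have "norm (A *v x) \<le> norm (norm x *\<^sub>R (\<chi> i. norm (A $ i)))"
    by (rule norm_le_componentwise_cart) (simp add: matrix_mult_dot, metis Cauchy_Schwarz_ineq2 mult.commute)
  also have "\<dots> = norm x * norm (\<chi> i. norm (A $ i))"
    by simp
  also have "norm (\<chi> i. norm (A $ i)) = norm A"
    unfolding norm_vec_def by simp
  finally show ?thesis by (simp add: mult.commute)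
qed

lemma invertible_if_norm_diff_scalar_less:
  fixes A :: "real^'n^'n"
  assumes "norm (A - c *\<^sub>R mat 1) < \<bar>c\<bar>"
  shows "invertible A"
proof -
  have "x = 0" if "A *v x = 0" for x
  proof (rule ccontr)
    assume "x \<noteq> 0"
    have "\<bar>c\<bar> * norm x = norm ((A - c *\<^sub>R mat 1) *v x)"
      using that by (simp add: matrix_vector_mult_diff_rdistrib scaleR_matrix_vector_assoc[symmetric])
    also have "\<dots> \<le> norm (A - c *\<^sub>R mat 1) * norm x"
      by (rule norm_matrix_vector_mult_le)
    also have "\<dots> < \<bar>c\<bar> * norm x"
      using assms \<open>x \<noteq> 0\<close> by simp
    finally show False by simp
  qed
  then have "inj ((*v) A)"
    by (simp add: linear_injective_0)
  then show ?thesis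
    by (simp add: invertible_left_inverse matrix_left_invertible_injective[symmetric])
qed

lemma matrix_inv_eqI:
  fixes A B :: "real^'n^'n"
  assumes "A ** B = mat 1" and "B ** A = mat 1"
  shows "matrix_inv A = B"
proof -
  have inv: "A ** matrix_inv A = mat 1 \<and> matrix_inv A ** A = mat 1"
    unfolding matrix_inv_def by (rule someI[of _ B]) (use assms in auto)
  have "matrix_inv A = (B ** A) ** matrix_inv A" by (simp add: assms)
  also have "\<dots> = B" using inv by (simp add: matrix_mul_assoc[symmetric])
  finally show ?thesis .
qed

lemma differentiable_matrix_mult:
  fixes f :: "'a::real_normed_vector \<Rightarrow> real^'n^'m" and g :: "'a \<Rightarrow> real^'k^'n"
  assumes "f differentiable (at x within S)" and "g differentiable (at x within S)"
  shows "(\<lambda>y. f y ** g y) differentiable (at x within S)"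
  using assms bounded_bilinear.FDERIV[OF bounded_bilinear_matrix_matrix_mult]
  unfolding differentiable_def by blast

lemma differentiable_matrix_vector_mult:
  fixes f :: "'a::real_normed_vector \<Rightarrow> real^'n^'m" and g :: "'a \<Rightarrow> real^'n"
  assumes "f differentiable (at x within S)" and "g differentiable (at x within S)"
  shows "(\<lambda>y. f y *v g y) differentiable (at x within S)"
  using assms bounded_bilinear.FDERIV[OF bounded_bilinear_matrix_vector_mult]
  unfolding differentiable_def by blast

lemma additive_zero_derivative_eq_0:
  fixes f :: "'a::real_normed_vector \<Rightarrow> real"
  assumes add: "\<And>x y. f (x + y) = f x + f y" and deriv: "(f has_derivative (\<lambda>h. 0)) (at 0)"
  shows "f x = 0"
proof -
  have "(f has_derivative (\<lambda>h. 0)) (at y)" for y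
  proof -
    have "((\<lambda>z. z - y) has_derivative (\<lambda>h. h)) (at y)"
      by (auto intro!: derivative_eq_intros)
    then have "((\<lambda>z. f (z - y)) has_derivative (\<lambda>h. 0)) (at y)"
      using has_derivative_compose[of "\<lambda>z. z - y" _ y UNIV f] deriv by simp
    then have "((\<lambda>z. f y + f (z - y)) has_derivative (\<lambda>h. 0)) (at y)"
      by (auto intro!: derivative_eq_intros)
    moreover have "f y + f (z - y) = f z" for z
      using add[of y "z - y"] by simp
    ultimately show ?thesis by simp
  qed
  then have "f x = f 0"
    by (intro has_derivative_zero_unique[of UNIV]) auto
  moreover have "f 0 = 0"
    using add[of 0 0] by simp
  ultimately show ?thesis by simp
qed

lemma exists_invertible_integral:
  fixes \<phi> :: "real \<Rightarrow> real^'n^'n"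
  assumes "continuous_on UNIV \<phi>" and "\<phi> 0 = mat 1"
  shows "\<exists>\<epsilon>>0. invertible (integral {0..\<epsilon>} \<phi>)"
proof -
  obtain \<delta> where "\<delta> > 0" and \<delta>: "\<And>s. dist s 0 < \<delta> \<Longrightarrow> dist (\<phi> s) (\<phi> 0) < 1/2"
    using assms(1) unfolding continuous_on_eq_continuous_at[OF open_UNIV] continuous_at_eps_delta
    by (metis UNIV_I half_gt_zero zero_less_one)
  define \<epsilon> where "\<epsilon> = \<delta> / 2"
  have "\<epsilon> > 0" using \<open>\<delta> > 0\<close> by (simp add: \<epsilon>_def)
  have "\<phi> integrable_on {0..\<epsilon>}"
    using assms(1) by (auto intro: integrable_continuous_interval continuous_on_subset)
  moreover have "((\<lambda>s. mat 1) has_integral \<epsilon> *\<^sub>R mat 1) {0..\<epsilon>}"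
    using has_integral_const_real[of "mat 1" 0 \<epsilon>] \<open>\<epsilon> > 0\<close> by simp
  ultimately have int: "((\<lambda>s. \<phi> s - mat 1) has_integral (integral {0..\<epsilon>} \<phi> - \<epsilon> *\<^sub>R mat 1)) (cbox 0 \<epsilon>)"
    unfolding cbox_interval by (intro has_integral_diff integrable_integral)
  have bound: "norm (\<phi> s - mat 1) \<le> 1/2" if "s \<in> cbox 0 \<epsilon>" for s
    using \<delta>[of s] that \<open>\<delta> > 0\<close> assms(2) by (simp add: \<epsilon>_def dist_norm)
  have "norm (integral {0..\<epsilon>} \<phi> - \<epsilon> *\<^sub>R mat 1) \<le> 1/2 * \<epsilon>"
    using has_integral_bound[OF _ int bound] \<open>\<epsilon> > 0\<close> by simp
  then have "norm (integral {0..\<epsilon>} \<phi> - \<epsilon> *\<^sub>R mat 1) < \<epsilon>"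
    using \<open>\<epsilon> > 0\<close> by simp
  then have "invertible (integral {0..\<epsilon>} \<phi>)"
    using \<open>\<epsilon> > 0\<close> by (intro invertible_if_norm_diff_scalar_less[where c = \<epsilon>]) simp
  with \<open>\<epsilon> > 0\<close> show ?thesis by blast
qed

lemma one_parameter_matrix_group_differentiable:
  fixes \<phi> :: "real \<Rightarrow> real^'n^'n"
  assumes cont: "continuous_on UNIV \<phi>" and hom: "\<And>s t. \<phi> (s + t) = \<phi> s ** \<phi> t"
    and "\<phi> 0 = mat 1"
  shows "\<phi> differentiable (at t)"
proof -
  obtain \<epsilon> where "\<epsilon> > 0" and "invertible (integral {0..\<epsilon>} \<phi>)"
    using exists_invertible_integral[OF cont \<open>\<phi> 0 = mat 1\<close>] by blast
  then obtain M' where M': "integral {0..\<epsilon>} \<phi> ** M' = mat 1"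
    unfolding invertible_def by blast
  define F where "F u = integral {t - 1..u} \<phi>" for u
  have int: "\<phi> integrable_on {a..b}" for a b
    using cont by (auto intro: integrable_continuous_interval continuous_on_subset)
  have F_diff: "F differentiable (at u)" if "t - 1 < u" "u < t + \<epsilon> + 1" for u
  proof -
    have "(F has_vector_derivative \<phi> u) (at u within {t - 1..t + \<epsilon> + 1})"
      unfolding F_def using that
      by (intro integral_has_vector_derivative continuous_on_subset[OF cont]) auto
    then have "(F has_vector_derivative \<phi> u) (at u)"
      using that by (simp add: at_within_Icc_at)
    then show ?thesis
      using differentiableI_vector by blast
  qed
  have shift: "\<phi> x = (F (x + \<epsilon>) - F x) ** M'" if "t - 1 < x" for x
  proof -
    have "\<phi> x ** integral {0..\<epsilon>} \<phi> = integral {0..\<epsilon>} (\<lambda>s. \<phi> x ** \<phi> s)"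
      using integral_linear[OF int bounded_bilinear.bounded_linear_right[OF bounded_bilinear_matrix_matrix_mult],
          of 0 \<epsilon> "\<phi> x"]
      by (simp add: o_def)
    also have "\<dots> = integral {0..\<epsilon>} (\<phi> \<circ> (+) x)"
      by (simp add: o_def hom)
    also have "\<dots> = integral {x..x + \<epsilon>} \<phi>"
      by (simp add: integral_shift_Icc_real add.commute)
    also have "\<dots> = F (x + \<epsilon>) - F x"
      unfolding F_def
      using Henstock_Kurzweil_Integration.integral_combine[OF _ _ int, of "t - 1" x "x + \<epsilon>", symmetric]
        that \<open>\<epsilon> > 0\<close>
      by (simp add: eq_diff_eq')
    finally have "\<phi> x ** integral {0..\<epsilon>} \<phi> = F (x + \<epsilon>) - F x" .
    then show ?thesis
      by (metis M' matrix_mul_assoc matrix_mul_rid)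
  qed
  have "(\<lambda>x. F (x + \<epsilon>)) differentiable (at t)"
    using F_diff[of "t + \<epsilon>"] \<open>\<epsilon> > 0\<close>
    by (intro differentiable_compose[of F, where g = "\<lambda>x. x + \<epsilon>"] differentiable_add differentiable_const differentiable_ident) auto
  then have "(\<lambda>x. (F (x + \<epsilon>) - F x) ** M') differentiable (at t)"
    using F_diff[of t] \<open>\<epsilon> > 0\<close> by (intro differentiable_matrix_mult differentiable_diff differentiable_const) auto
  moreover have "(F (x + \<epsilon>) - F x) ** M' = \<phi> x" if "dist x t < 1" for x
    using shift that by (simp add: dist_real_def)
  ultimately show ?thesis
    by (rule differentiable_transform_within[OF _ zero_less_one UNIV_I])
qed

lemma is_rep_differentiable:
  fixes \<rho> :: "real^'h \<Rightarrow> real^'v^'v"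
  assumes "is_rep \<rho>"
  shows "\<rho> differentiable (at x)"
proof -
  have hom: "\<rho> (a + b) = \<rho> a ** \<rho> b" for a b
    using assms by (simp add: is_rep_def)
  have coordinate: "(\<lambda>y. \<rho> ((y $ i) *\<^sub>R axis i 1)) differentiable (at x)" for i
  proof (rule differentiable_compose[of "\<lambda>s. \<rho> (s *\<^sub>R axis i 1)"])
    show "(\<lambda>s. \<rho> (s *\<^sub>R axis i 1)) differentiable (at (x $ i))"
      using assms unfolding is_rep_def
      by (intro one_parameter_matrix_group_differentiable)
        (auto simp: scaleR_add_left intro!: continuous_on_compose2[of UNIV \<rho>] continuous_intros)
  qed (simp add: bounded_linear_imp_differentiable bounded_linear_vec_nth)
  have partial_sums: "finite S \<Longrightarrow> (\<lambda>y. \<rho> (\<Sum>i\<in>S. (y $ i) *\<^sub>R axis i 1)) differentiable (at x)" for S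
  proof (induction S rule: finite_induct)
    case empty
    show ?case by simp
  next
    case (insert i S)
    then show ?case
      using differentiable_matrix_mult[OF coordinate insert.IH] by (simp add: hom)
  qed
  have expansion: "(\<Sum>i\<in>UNIV. (y $ i) *\<^sub>R axis i 1) = y" for y :: "real^'h"
    using basis_expansion[of y] by (simp add: scalar_mult_eq_scaleR)
  show ?thesis
    using partial_sums[of UNIV] by (simp add: expansion)
qed

lemma is_rep_inverse:
  assumes "is_rep \<rho>"
  shows "\<rho> a ** \<rho> (- a) = mat 1" and "\<rho> (- a) ** \<rho> a = mat 1"
proof -
  have "\<rho> 0 = mat 1" and hom: "\<And>a b. \<rho> (a + b) = \<rho> a ** \<rho> b"
    using assms by (simp_all add: is_rep_def)
  then show "\<rho> a ** \<rho> (- a) = mat 1" and "\<rho> (- a) ** \<rho> a = mat 1"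
    by (simp_all flip: hom)
qed

lemma gmult_eq:
  assumes "is_rep \<rho>2"
  shows "gmult \<rho>1 \<rho>2 p q = (fst p + fst q, \<rho>1 (fst p) *v snd q + \<rho>2 (- fst q) *v snd p)"
proof -
  have "matrix_inv (\<rho>2 a) = \<rho>2 (- a)" for a
    using is_rep_inverse[OF assms] by (rule matrix_inv_eqI)
  then show ?thesis
    by (simp add: gmult_def)
qed

lemma gmult_differentiable:
  fixes \<rho>1 \<rho>2 :: "real^'h \<Rightarrow> real^'v^'v"
  assumes "is_rep \<rho>1" and "is_rep \<rho>2"
  shows "gmult \<rho>1 \<rho>2 g differentiable (at k)"
    and "(\<lambda>y. gmult \<rho>1 \<rho>2 y k) differentiable (at g)"
proof -
  have fst: "fst differentiable (at x)" and snd: "snd differentiable (at x)" for x :: "(real^'h) \<times> (real^'v)"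
    by (simp_all add: bounded_linear_imp_differentiable bounded_linear_fst bounded_linear_snd)
  have rep: "(\<lambda>y. \<rho> (c *\<^sub>R fst y) *v v) differentiable (at x)"
    if "is_rep \<rho>" for \<rho> :: "real^'h \<Rightarrow> real^'v^'v" and c v and x :: "(real^'h) \<times> (real^'v)"
  proof (rule differentiable_matrix_vector_mult[OF differentiable_compose[of \<rho>]])
    show "\<rho> differentiable (at (c *\<^sub>R fst x))"
      using that by (rule is_rep_differentiable)
    show "(\<lambda>y. c *\<^sub>R fst y) differentiable (at x)"
      by (simp add: bounded_linear_imp_differentiable bounded_linear_scaleR_right bounded_linear_fst bounded_linear_compose)
  qed simp
  have "gmult \<rho>1 \<rho>2 g = (\<lambda>y. (fst g + fst y, \<rho>1 (fst g) *v snd y + \<rho>2 (- fst y) *v snd g))"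
    by (rule ext) (rule gmult_eq[OF assms(2)])
  then show "gmult \<rho>1 \<rho>2 g differentiable (at k)"
    using rep[OF assms(2), of "-1"] fst snd
    by (simp add: differentiable_matrix_vector_mult)
  show "(\<lambda>y. gmult \<rho>1 \<rho>2 y k) differentiable (at g)"
    using rep[OF assms(1), of 1] fst snd
    by (simp add: gmult_eq[OF assms(2)] differentiable_matrix_vector_mult)
qed

lemma pull_derivative_of_fst_translation:
  fixes f :: "'a::euclidean_space \<times> 'b::euclidean_space \<Rightarrow> 'a \<times> 'b"
  assumes "f differentiable (at k)" and translation: "\<And>y. fst (f y) = c + fst y"
  shows "pull (frechet_derivative f (at k)) (a, 0) = (a, 0)"
proof -
  define D where "D = frechet_derivative f (at k)"
  have "(f has_derivative D) (at k)"
    using assms(1) by (simp add: D_def frechet_derivative_works)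
  then have "((\<lambda>y. fst (f y)) has_derivative (\<lambda>h. fst (D h))) (at k)"
    by (rule has_derivative_fst)
  moreover have "((\<lambda>y. fst (f y)) has_derivative fst) (at k)"
    unfolding translation by (auto intro!: derivative_eq_intros)
  ultimately have fst_D: "fst (D h) = fst h" for h
    by (metis has_derivative_unique)
  have "pull D (a, 0) = (\<Sum>b\<in>Basis. ((a, 0) \<bullet> b) *\<^sub>R b)"
    unfolding pull_def by (intro sum.cong refl) (simp add: inner_Pair_0 fst_D inner_commute)
  also have "\<dots> = (a, 0)"
    by (rule euclidean_representation)
  finally show ?thesis
    by (simp add: D_def)
qed

lemma pull_gmult_translation:
  fixes \<rho>1 \<rho>2 :: "real^'h \<Rightarrow> real^'v^'v"
  assumes "is_rep \<rho>1" and "is_rep \<rho>2"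
  shows "pull (frechet_derivative (gmult \<rho>1 \<rho>2 g) (at k)) (a, 0) = (a, 0)"
    and "pull (frechet_derivative (\<lambda>y. gmult \<rho>1 \<rho>2 y k) (at g)) (a, 0) = (a, 0)"
proof -
  show "pull (frechet_derivative (gmult \<rho>1 \<rho>2 g) (at k)) (a, 0) = (a, 0)"
    by (rule pull_derivative_of_fst_translation[OF gmult_differentiable(1)[OF assms], where c = "fst g"])
      (simp add: gmult_def)
  show "pull (frechet_derivative (\<lambda>y. gmult \<rho>1 \<rho>2 y k) (at g)) (a, 0) = (a, 0)"
    by (rule pull_derivative_of_fst_translation[OF gmult_differentiable(2)[OF assms], where c = "fst k"])
      (simp add: gmult_def add.commute)
qed

lemma gmult_additive_eq_0:
  fixes \<rho>1 \<rho>2 :: "real^'h \<Rightarrow> real^'v^'v" and f :: "(real^'h) \<times> (real^'v) \<Rightarrow> real"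
  assumes "is_rep \<rho>1" and "is_rep \<rho>2"
    and add: "\<And>g k. f (gmult \<rho>1 \<rho>2 g k) = f g + f k"
    and deriv: "(f has_derivative (\<lambda>h. 0)) (at (0, 0))"
  shows "f x = 0"
proof -
  have one: "\<rho>1 0 = mat 1" "\<rho>2 0 = mat 1"
    using assms(1,2) by (simp_all add: is_rep_def)
  have H: "f (h, 0) = 0" for h
  proof (rule additive_zero_derivative_eq_0[where f = "\<lambda>h. f (h, 0)"])
    show "f (h + h', 0) = f (h, 0) + f (h', 0)" for h h'
      using add[of "(h, 0)" "(h', 0)"] by (simp add: gmult_eq[OF assms(2)])
    show "((\<lambda>h. f (h, 0)) has_derivative (\<lambda>h. 0)) (at 0)"
      using has_derivative_compose[of "\<lambda>h. (h, 0)" "\<lambda>h. (h, 0)" 0 UNIV f] deriv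
      by (simp add: has_derivative_Pair)
  qed
  have V: "f (0, v) = 0" for v
  proof (rule additive_zero_derivative_eq_0[where f = "\<lambda>v. f (0, v)"])
    show "f (0, v + v') = f (0, v) + f (0, v')" for v v'
      using add[of "(0, v)" "(0, v')"] by (simp add: gmult_eq[OF assms(2)] one add.commute)
    show "((\<lambda>v. f (0, v)) has_derivative (\<lambda>h. 0)) (at 0)"
      using has_derivative_compose[of "\<lambda>v. (0, v)" "\<lambda>v. (0, v)" 0 UNIV f] deriv
      by (simp add: has_derivative_Pair)
  qed
  have "gmult \<rho>1 \<rho>2 (0, \<rho>2 (fst x) *v snd x) (fst x, 0) = x"
    by (simp add: gmult_eq[OF assms(2)] one matrix_vector_mul_assoc is_rep_inverse[OF assms(2)])
  then show ?thesis
    using add[of "(0, \<rho>2 (fst x) *v snd x)" "(fst x, 0)"] by (simp add: H V)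
qed

lemma Cinf_differentiable: "Cinf f \<Longrightarrow> f differentiable (at x)"
  by (erule Cinf.cases) blast

lemma grad_fst_component:
  "grad (\<lambda>y::(real^'h) \<times> 'b::euclidean_space. fst y $ i) x = (axis i 1, 0)"
proof -
  have "((\<lambda>y::(real^'h) \<times> 'b. fst y $ i) has_derivative (\<lambda>h. fst h $ i)) (at x)"
    by (auto intro!: derivative_eq_intros bounded_linear.has_derivative[OF bounded_linear_vec_nth])
  then have "frechet_derivative (\<lambda>y::(real^'h) \<times> 'b. fst y $ i) (at x) = (\<lambda>h. fst h $ i)"
    by (rule frechet_derivative_at[symmetric])
  then have "grad (\<lambda>y::(real^'h) \<times> 'b. fst y $ i) x = (\<Sum>b\<in>Basis. (b \<bullet> (axis i 1, 0::'b)) *\<^sub>R b)"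
    unfolding grad_def by (intro sum.cong refl) (simp add: inner_Pair_0 inner_axis)
  also have "\<dots> = (axis i 1, 0)"
    using euclidean_representation[of "(axis i (1::real), 0::'b)"] by (simp add: inner_commute)
  finally show ?thesis .
qed

theorem lemma1:
  fixes \<rho>1 \<rho>2 :: "real^'h \<Rightarrow> real^'v^'v"
    and \<pi> :: "((real^'h) \<times> (real^'v)) \<Rightarrow> ((real^'h) \<times> (real^'v)) \<Rightarrow> ((real^'h) \<times> (real^'v)) \<Rightarrow> real"
  assumes "is_rep \<rho>1" and "is_rep \<rho>2"
    and "\<forall>a b. \<rho>1 a ** \<rho>2 b = \<rho>2 b ** \<rho>1 a"
    and "poisson_lie (gmult \<rho>1 \<rho>2) \<pi>"
    and "\<forall>a b. dual_bracket (0, 0) \<pi> (a, 0) (b, 0) = (\<lambda>X. 0)"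
  shows "\<forall>i j x. pbr \<pi> (\<lambda>y. fst y $ i) (\<lambda>y. fst y $ j) x = 0"
proof -
  \<comment> \<open>The commutation hypothesis only serves to make \<open>gmult\<close> associative.\<close>
  have mult: "multiplicative (gmult \<rho>1 \<rho>2) \<pi>" and smooth: "Cinf (\<lambda>x. \<pi> x a b)" for a b
    using assms(4) unfolding poisson_lie_def poisson_bivector_def by blast+
  have "\<pi> x (a, 0) (b, 0) = 0" for x a b
  proof (rule gmult_additive_eq_0[OF assms(1,2), where f = "\<lambda>x. \<pi> x (a, 0) (b, 0)"])
    show "\<pi> (gmult \<rho>1 \<rho>2 g k) (a, 0) (b, 0) = \<pi> g (a, 0) (b, 0) + \<pi> k (a, 0) (b, 0)" for g k
      using mult[unfolded multiplicative_def, rule_format, of g k "(a, 0)" "(b, 0)"]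
      by (simp add: pull_gmult_translation[OF assms(1,2)])
    have "frechet_derivative (\<lambda>x. \<pi> x (a, 0) (b, 0)) (at (0, 0)) = (\<lambda>h. 0)"
      using assms(5) by (simp add: dual_bracket_def linearization_def fun_eq_iff)
    then show "((\<lambda>x. \<pi> x (a, 0) (b, 0)) has_derivative (\<lambda>h. 0)) (at (0, 0))"
      using Cinf_differentiable[OF smooth] frechet_derivative_works by metis
  qed
  then show ?thesis
    by (simp add: pbr_def grad_fst_component)
qed

end
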